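(* Let $b$ be a prime, $m,s\in\mathbb{N}$, and let $P=P(C_1,\ldots,C_s)$ be a digital $(t,m,s)$-net in base $b$ with square generating matrices $C_1,\ldots,C_s\in\mathbb{F}_b^{m\times m}$. For each nonempty $u\subseteq\{1,\dots,s\}$ let $t_u$ be such that the projection $P_u$ of $P$ onto the coordinates in $u$ is a $(t_u,m,|u|)$-net in base $b$. Let $L_1,\dots,L_s$ be drawn independently at random from $\mathcal{L}_{\infty,m}$. Let $\boldsymbol{k}=(k_1,\ldots,k_s)\in\mathbb{N}_0^s\setminus\{\boldsymbol{0}\}$ and $u=\{j\mid k_j\neq0\}$. If $k_j<b^m$ for all $j$, then \[\Pr\left[\boldsymbol{k}\in P^\perp(L_1C_1,\ldots,L_sC_s)\right]\le\left(\frac{b}{b-1}\right)^{|u|-1}b^{-m+t_u}.\] If $k_j\ge b^m$ for some $j$, and each $C_j$ is non-singular, then \[\Pr\left[\boldsymbol{k}\in P^\perp(L_1C_1,\ldots,L_sC_s)\right]=\frac{1}{b^m}.\]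
   Context: $\mathbb{F}_b$ is the field with $b$ elements. Digital net: for $n\in\mathbb{N}\cup\{\infty\}$ and $D_1,\dots,D_s\in\mathbb{F}_b^{n\times m}$, the digital net $P(D_1,\dots,D_s)$ is the multiset of $b^m$ points $\boldsymbol{x}_k=(\psi_n(D_1\vec\kappa),\dots,\psi_n(D_s\vec\kappa))$, $0\le k<b^m$, where $\vec\kappa=(\kappa_0,\dots,\kappa_{m-1})^\top$ are the $b$-adic digits of $k=\sum_{i=0}^{m-1}\kappa_ib^i$ and $\psi_n((y_1,\dots,y_n)^\top)=\sum_{i=1}^ny_ib^{-i}$. A $b$-adic elementary interval is $\prod_{j}[c_jb^{-a_j},(c_j+1)b^{-a_j})$ with $a_j\in\mathbb{N}_0$, $0\le c_j<b^{a_j}$; a $b^m$-point set in $[0,1)^s$ is a $(t,m,s)$-net in base $b$ if every elementary interval of volume $b^{-m+t}$ contains exactly $b^t$ points; a digital $(t,m,s)$-net is a digital net that is a $(t,m,s)$-net. For $k\in\mathbb{N}_0$ with digits $\kappa_0,\kappa_1,\dots$, $\vec k=(\kappa_0,\kappa_1,\dots)^\top$ and $\mathrm{tr}_n(\vec k)=(\kappa_0,\dots,\kappa_{n-1})^\top$ ($\mathrm{tr}_\infty(\vec k)=\vec k$). Dual net: $P^\perp(D_1,\dots,D_s)=\{\boldsymbol{k}\in\mathbb{N}_0^s\mid D_1^\top\mathrm{tr}_n(\vec k_1)+\cdots+D_s^\top\mathrm{tr}_n(\vec k_s)=\boldsymbol 0\in\mathbb{F}_b^m\}$. $\mathcal{L}_{\infty,m}$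 is the set of matrices $L=(\ell_{i,j})\in\mathbb{F}_b^{\infty\times m}$ with $\ell_{i,j}=0$ for $i<j$ and $\ell_{i,i}\neq0$; a random element has independent entries, diagonal uniform on $\mathbb{F}_b\setminus\{0\}$ and entries with $i>j$ uniform on $\mathbb{F}_b$. Thus $L_jC_j\in\mathbb{F}_b^{\infty\times m}$. *)

theory Defs
  imports "HOL-Probability.Probability"
begin

text \<open>Elements of F_b are represented by naturals in {0..<b} (b prime), arithmetic mod b.
  Coordinates are indexed by j in {1..s}; matrix rows/columns are indexed from 0.
  A matrix is a function row -> column -> entry.\<close>

definition digit :: "nat \<Rightarrow> nat \<Rightarrow> nat \<Rightarrow> nat" where
  "digit b k i = (k div b ^ i) mod b"

text \<open>The point x_k of the digital net P(C_1,...,C_s) with square m x m matrices (n = m);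
  coordinate j is psi_m(C_j kappa).\<close>
definition net_point :: "nat \<Rightarrow> nat \<Rightarrow> (nat \<Rightarrow> nat \<Rightarrow> nat \<Rightarrow> nat) \<Rightarrow> nat \<Rightarrow> nat \<Rightarrow> real" where
  "net_point b m C k j =
     (\<Sum>i<m. real ((\<Sum>l<m. C j i l * digit b k l) mod b) / real b ^ Suc i)"

text \<open>The (multi)set of points x_k, k < b^m, projected to the coordinates in u, is a
  (t,m,|u|)-net in base b: every b-adic elementary interval (in the coordinates of u) of
  volume b^(-m+t) contains exactly b^t points (counted with multiplicity via indices k).\<close>
definition is_net :: "nat \<Rightarrow> nat \<Rightarrow> nat \<Rightarrow> nat set \<Rightarrow> (nat \<Rightarrow> nat \<Rightarrow> real) \<Rightarrow> bool" where
  "is_net b t m u x \<longleftrightarrow>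
     (\<forall>a c :: nat \<Rightarrow> nat. (\<Sum>j\<in>u. a j) + t = m \<longrightarrow> (\<forall>j\<in>u. c j < b ^ a j) \<longrightarrow>
        card {k. k < b ^ m \<and> (\<forall>j\<in>u. real (c j) / real b ^ a j \<le> x k j
                                   \<and> x k j < real (c j + 1) / real b ^ a j)} = b ^ t)"

text \<open>Dual net membership for matrices D_j in F_b^(infinity x m) (entry D j i r, row i, column r
  < m): sum_j D_j^T tr_infinity(k_j) = 0 in F_b^m. The sum over rows is over the (finitely many)
  nonzero digits of k_j.\<close>
definition in_dual :: "nat \<Rightarrow> nat \<Rightarrow> nat \<Rightarrow> (nat \<Rightarrow> nat \<Rightarrow> nat \<Rightarrow> nat) \<Rightarrow> (nat \<Rightarrow> nat) \<Rightarrow> bool" where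
  "in_dual b m s D k \<longleftrightarrow>
     (\<forall>r<m. (\<Sum>j\<in>{1..s}. \<Sum>i\<in>{i. digit b (k j) i \<noteq> 0}. D j i r * digit b (k j) i) mod b = 0)"

definition mat_prod :: "nat \<Rightarrow> nat \<Rightarrow> (nat \<Rightarrow> nat \<Rightarrow> nat) \<Rightarrow> (nat \<Rightarrow> nat \<Rightarrow> nat) \<Rightarrow> nat \<Rightarrow> nat \<Rightarrow> nat" where
  "mat_prod b m A B i r = (\<Sum>l<m. A i l * B l r) mod b"

text \<open>Index set of the free (random) entries of L_1,...,L_s in L_{infinity,m}:
  (j,i,l) with j in {1..s}, column l < m and l \<le> i (entries above the diagonal are 0).\<close>
definition L_index :: "nat \<Rightarrow> nat \<Rightarrow> (nat \<times> nat \<times> nat) set" where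
  "L_index m s = {(j, i, l). j \<in> {1..s} \<and> l < m \<and> l \<le> i}"

definition L_measure :: "nat \<Rightarrow> nat \<Rightarrow> nat \<Rightarrow> (nat \<times> nat \<times> nat \<Rightarrow> nat) measure" where
  "L_measure b m s = PiM (L_index m s)
     (\<lambda>(j, i, l). measure_pmf (pmf_of_set (if i = l then {1..<b} else {0..<b})))"

definition L_of :: "nat \<Rightarrow> (nat \<times> nat \<times> nat \<Rightarrow> nat) \<Rightarrow> nat \<Rightarrow> nat \<Rightarrow> nat \<Rightarrow> nat" where
  "L_of m \<omega> j i l = (if l < m \<and> l \<le> i then \<omega> (j, i, l) else 0)"

definition nonsingular :: "nat \<Rightarrow> nat \<Rightarrow> (nat \<Rightarrow> nat \<Rightarrow> nat) \<Rightarrow> bool" where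
  "nonsingular b m C \<longleftrightarrow>
     (\<exists>B. \<forall>i<m. \<forall>r<m. (\<Sum>l<m. B i l * C l r) mod b = (if i = r then 1 else 0))"

end

theory Submission
  imports Defs
begin

text \<open>
  If all \<open>k\<^sub>j < b\<^sup>N\<close>, only the entries of \<open>L\<^sub>1, \<dots>, L\<^sub>s\<close> in rows below \<open>N\<close> matter, so the
  probability is the proportion of solutions of a linear system over \<open>\<bbbF>\<^sub>b\<close> among independent
  uniform entries (nonzero on the diagonal). Detecting the system with the additive characters of
  \<open>\<bbbF>\<^sub>b\<close> turns \<open>b\<^sup>m\<close> times this proportion into a sum over \<open>\<kappa> \<in> \<bbbF>\<^sub>b\<^sup>m\<close> of products of
  character averages; such an average is 1 if \<open>b\<close> divides its argument and otherwise
  \<open>-1/(b-1)\<close> for a diagonal entry and 0 for an off-diagonal one.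

  If some \<open>k\<^sub>j \<ge> b\<^sup>m\<close> and \<open>C\<^sub>j\<close> is non-singular, a nonzero digit of \<open>k\<^sub>j\<close> in a position
  \<open>\<ge> m\<close> meets off-diagonal entries which annihilate the term of every \<open>\<kappa> \<noteq> 0\<close>, and the
  probability is \<open>b ^ -m\<close>.

  If all \<open>k\<^sub>j < b\<^sup>m\<close>, let \<open>d\<^sub>j\<close> be the position of the leading digit of \<open>k\<^sub>j\<close>. Letting the
  diagonal entries \<open>L\<^sub>j(d\<^sub>j, d\<^sub>j)\<close> for all \<open>j \<in> u\<close> but one \<open>j\<^sub>0\<close> vanish as well costs at most
  the factor \<open>(b/(b-1)) ^ (|u| - 1)\<close> and turns the character sum into \<open>|Z| - |Z\<^sub>0 - Z|/(b-1)\<close>,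
  where \<open>Z\<close> is the set of \<open>\<kappa>\<close> annihilated by rows \<open>0..d\<^sub>j\<close> of every \<open>C\<^sub>j\<close>, and \<open>Z\<^sub>0 \<supseteq> Z\<close>
  omits the row \<open>d\<^sub>j\<^sub>0\<close> of \<open>C\<^sub>j\<^sub>0\<close>. If these rows are at least \<open>m - t\<^sub>u\<close> in number, the net
  property gives \<open>|Z| \<le> b ^ t\<^sub>u\<close>; otherwise it shows that the extra row cuts \<open>Z\<^sub>0\<close> by the factor
  \<open>b\<close>, and the expression is not positive.
\<close>

section \<open>Uniform product measures\<close>

lemma emeasure_PiM_pmf_of_set_Collect:
  fixes A :: "'i \<Rightarrow> 'a set"
  defines "M \<equiv> \<lambda>x. measure_pmf (pmf_of_set (A x))"
  assumes F: "finite F" "F \<subseteq> I" and A: "\<And>x. finite (A x)" "\<And>x. A x \<noteq> {}"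
  shows "emeasure (PiM I M) {\<omega>\<in>space (PiM I M). \<forall>x\<in>F. \<omega> x \<in> B x}
         = (\<Prod>x\<in>F. ennreal (real (card (A x \<inter> B x)) / real (card (A x))))"
proof -
  interpret product_prob_space M I
    unfolding M_def by unfold_locales
  show ?thesis
    using A by (subst emeasure_PiM_Collect[OF F(2,1)])
      (auto simp: M_def measure_pmf.emeasure_eq_measure measure_pmf_of_set)
qed

lemma measure_PiM_pmf_of_set_cylinder:
  fixes A :: "'i \<Rightarrow> 'a set"
  defines "M \<equiv> \<lambda>x. measure_pmf (pmf_of_set (A x))"
  assumes F: "finite F" "F \<subseteq> I" and A: "\<And>x. finite (A x)" "\<And>x. A x \<noteq> {}"
    and \<sigma>: "\<sigma> \<in> PiE F A"
  shows "measure (PiM I M) {\<omega>\<in>space (PiM I M). \<forall>x\<in>F. \<omega> x \<in> {\<sigma> x}} = 1 / real (card (PiE F A))"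
proof -
  have "card (A x \<inter> {\<sigma> x}) = 1" if "x \<in> F" for x
    using that \<sigma> by (auto simp: PiE_iff)
  moreover have "emeasure (PiM I M) {\<omega>\<in>space (PiM I M). \<forall>x\<in>F. \<omega> x \<in> {\<sigma> x}}
      = (\<Prod>x\<in>F. ennreal (real (card (A x \<inter> {\<sigma> x})) / real (card (A x))))"
    unfolding M_def by (rule emeasure_PiM_pmf_of_set_Collect[OF F A])
  ultimately have "emeasure (PiM I M) {\<omega>\<in>space (PiM I M). \<forall>x\<in>F. \<omega> x \<in> {\<sigma> x}}
      = (\<Prod>x\<in>F. ennreal (1 / real (card (A x))))"
    by simp
  then show ?thesis
    by (simp add: measure_def prod_ennreal card_PiE[OF F(1)] prod_dividef prod_nonneg)
qed

lemma measure_PiM_pmf_of_set_finite_dependence: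
  fixes A :: "'i \<Rightarrow> 'a::countable set" and Q :: "('i \<Rightarrow> 'a) \<Rightarrow> bool"
  defines "M \<equiv> \<lambda>x. measure_pmf (pmf_of_set (A x))"
  assumes F: "finite F" "F \<subseteq> I" and A: "\<And>x. finite (A x)" "\<And>x. A x \<noteq> {}"
    and dep: "\<And>\<omega> \<omega>'. (\<forall>x\<in>F. \<omega> x = \<omega>' x) \<Longrightarrow> Q \<omega> = Q \<omega>'"
  shows "measure (PiM I M) {\<omega>\<in>space (PiM I M). Q \<omega>}
         = real (card {\<sigma>\<in>PiE F A. Q \<sigma>}) / real (card (PiE F A))"
proof -
  interpret product_prob_space M I
    unfolding M_def by unfold_locales
  let ?S = "space (PiM I M)" and ?E = "{\<omega>\<in>space (PiM I M). Q \<omega>}"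
  define cyl where "cyl \<sigma> = {\<omega>\<in>?S. \<forall>x\<in>F. \<omega> x \<in> {\<sigma> x}}" for \<sigma> :: "'i \<Rightarrow> 'a"
  define G where "G = {\<sigma>\<in>PiE F A. Q \<sigma>}"
  have in_cyl_iff: "\<omega> \<in> cyl \<sigma> \<longleftrightarrow> \<omega> \<in> ?S \<and> (\<forall>x\<in>F. \<omega> x = \<sigma> x)" for \<omega> \<sigma>
    unfolding cyl_def by auto
  have Q_restrict: "Q (restrict \<omega> F) = Q \<omega>" for \<omega>
    by (rule dep) simp
  have in_E_iff: "\<omega> \<in> ?E \<longleftrightarrow> \<omega> \<in> (\<Union>\<sigma>\<in>{\<sigma>\<in>PiE F B. Q \<sigma>}. cyl \<sigma>)"
    if "\<forall>x\<in>F. \<omega> x \<in> B x" for \<omega> B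
  proof
    assume "\<omega> \<in> ?E"
    with that show "\<omega> \<in> (\<Union>\<sigma>\<in>{\<sigma>\<in>PiE F B. Q \<sigma>}. cyl \<sigma>)"
      by (intro UN_I[of "restrict \<omega> F"]) (auto simp: in_cyl_iff Q_restrict)
  next
    assume "\<omega> \<in> (\<Union>\<sigma>\<in>{\<sigma>\<in>PiE F B. Q \<sigma>}. cyl \<sigma>)"
    then obtain \<sigma> where "Q \<sigma>" "\<omega> \<in> cyl \<sigma>" by blast
    then show "\<omega> \<in> ?E"
      using dep[of \<omega> \<sigma>] by (simp add: in_cyl_iff)
  qed
  have sets_cyl: "cyl \<sigma> \<in> sets (PiM I M)" for \<sigma>
    unfolding cyl_def using F
    by (intro sets.sets_Collect_finite_All) (auto intro!: sets_Collect_single simp: M_def)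
  have E_eq: "?E = (\<Union>\<sigma>\<in>{\<sigma>\<in>PiE F (\<lambda>_. UNIV). Q \<sigma>}. cyl \<sigma>)"
    using in_E_iff[of _ "\<lambda>_. UNIV"] by (auto simp: in_cyl_iff)
  have sets_E: "?E \<in> sets (PiM I M)"
    unfolding E_eq
    by (intro sets.countable_UN'' countable_subset[OF _ countable_PiE[OF F(1)]] sets_cyl) auto
  have finite_G: "finite G"
    unfolding G_def using F A by (simp add: finite_PiE)
  have "AE \<omega> in PiM I M. \<forall>x\<in>F. \<omega> x \<in> A x"
    using F A by (intro AE_I_eq_1)
      (auto simp: emeasure_PiM_pmf_of_set_Collect[OF F A, folded M_def] M_def
        intro!: sets.sets_Collect_finite_All sets_Collect_single)
  then have "AE \<omega> in PiM I M. \<omega> \<in> ?E \<longleftrightarrow> \<omega> \<in> (\<Union>\<sigma>\<in>G. cyl \<sigma>)"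
    by eventually_elim (simp only: in_E_iff[of _ A] G_def)
  then have "measure (PiM I M) ?E = measure (PiM I M) (\<Union>\<sigma>\<in>G. cyl \<sigma>)"
    using sets_E finite_G sets_cyl by (intro measure_eq_AE) auto
  also have "\<dots> = (\<Sum>\<sigma>\<in>G. measure (PiM I M) (cyl \<sigma>))"
  proof (rule finite_measure_finite_Union[OF finite_G])
    show "disjoint_family_on cyl G"
      unfolding disjoint_family_on_def cyl_def G_def
      by (auto simp: PiE_iff fun_eq_iff) (metis extensional_arb)
  qed (use sets_cyl in auto)
  also have "\<dots> = (\<Sum>\<sigma>\<in>G. 1 / real (card (PiE F A)))"
    unfolding cyl_def G_def M_def using measure_PiM_pmf_of_set_cylinder[OF F A] by simp
  finally show ?thesis
    by (simp add: G_def)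
qed

section \<open>Additive characters\<close>

definition add_char :: "nat \<Rightarrow> nat \<Rightarrow> complex" where
  "add_char b n = exp (2 * of_real pi * \<i> * of_nat n / of_nat b)"

lemma add_char_add: "add_char b (x + y) = add_char b x * add_char b y"
  unfolding add_char_def by (simp add: add_divide_distrib ring_distribs exp_add)

lemma add_char_0 [simp]: "add_char b 0 = 1"
  by (simp add: add_char_def)

lemma add_char_sum: "add_char b (\<Sum>i\<in>A. f i) = (\<Prod>i\<in>A. add_char b (f i))"
  by (induction A rule: infinite_finite_induct) (auto simp: add_char_add)

lemma add_char_mult: "add_char b (c * g) = add_char b g ^ c"
  by (induction c) (auto simp: add_char_add)

lemma add_char_eq_1_iff: "b > 0 \<Longrightarrow> add_char b n = 1 \<longleftrightarrow> b dvd n"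
  unfolding add_char_def by (rule complex_root_unity_eq_1) simp

lemma sum_add_char:
  assumes "b > 0"
  shows "(\<Sum>c<b. add_char b (c * g)) = (if b dvd g then of_nat b else 0)"
proof (cases "b dvd g")
  case True
  then have "add_char b (c * g) = 1" for c
    using assms by (simp add: add_char_eq_1_iff)
  then show ?thesis using True by simp
next
  case False
  define \<zeta> where "\<zeta> = add_char b g"
  have "\<zeta> \<noteq> 1" using False assms by (simp add: \<zeta>_def add_char_eq_1_iff)
  moreover have "\<zeta> ^ b = 1"
    using assms by (simp add: \<zeta>_def add_char_mult[symmetric] add_char_eq_1_iff)
  ultimately show ?thesis
    using False by (simp add: add_char_mult \<zeta>_def[symmetric] geometric_sum)
qed

definition residue_vectors :: "nat \<Rightarrow> nat \<Rightarrow> (nat \<Rightarrow> nat) set" where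
  "residue_vectors b m = PiE {..<m} (\<lambda>_. {..<b})"

lemma finite_residue_vectors [simp]: "finite (residue_vectors b m)"
  by (simp add: residue_vectors_def finite_PiE)

lemma residue_vectors_less: "\<kappa> \<in> residue_vectors b m \<Longrightarrow> l < m \<Longrightarrow> \<kappa> l < b"
  by (auto simp: residue_vectors_def PiE_iff)

lemma card_residue_vectors: "card (residue_vectors b m) = b ^ m"
  by (simp add: residue_vectors_def card_PiE)

lemma sum_residue_vectors_add_char:
  assumes "b > 0"
  shows "(\<Sum>\<kappa>\<in>residue_vectors b m. \<Prod>r<m. add_char b (\<kappa> r * v r))
         = (if \<forall>r<m. b dvd v r then of_nat (b ^ m) else 0)"
proof -
  have "(\<Sum>\<kappa>\<in>residue_vectors b m. \<Prod>r<m. add_char b (\<kappa> r * v r))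
        = (\<Prod>r<m. \<Sum>c<b. add_char b (c * v r))"
    unfolding residue_vectors_def by (rule prod_sum_PiE[symmetric]) auto
  also have "\<dots> = (\<Prod>r<m. if b dvd v r then of_nat b else 0)"
    using assms by (simp add: sum_add_char)
  also have "\<dots> = (if \<forall>r<m. b dvd v r then of_nat (b ^ m) else 0)"
    by (auto simp: prod_zero_iff)
  finally show ?thesis .
qed

definition entry_set :: "nat \<Rightarrow> bool \<Rightarrow> nat set" where
  "entry_set b nz = (if nz then {1..<b} else {0..<b})"

lemma finite_entry_set [simp]: "finite (entry_set b nz)"
  by (simp add: entry_set_def)

lemma card_entry_set: "card (entry_set b nz) = (if nz then b - 1 else b)"
  by (simp add: entry_set_def)

lemma entry_set_ne: "b > 1 \<Longrightarrow> entry_set b nz \<noteq> {}"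
  by (auto simp: entry_set_def)

text \<open>The average of \<open>add_char b (a * g)\<close> over \<open>a \<in> entry_set b nz\<close>.\<close>

definition mean_char :: "nat \<Rightarrow> bool \<Rightarrow> nat \<Rightarrow> real" where
  "mean_char b nz g = (if b dvd g then 1 else if nz then - 1 / (real b - 1) else 0)"

lemma sum_entry_set_add_char:
  assumes "b > 1"
  shows "(\<Sum>a\<in>entry_set b nz. add_char b (a * g))
         = of_real (real (card (entry_set b nz)) * mean_char b nz g)"
proof -
  have "{..<b} = insert 0 {1..<b}" using assms by auto
  then have "(\<Sum>a\<in>{1..<b}. add_char b (a * g)) = (\<Sum>c<b. add_char b (c * g)) - 1"
    by (simp add: add_char_def)
  then show ?thesis
    using assms sum_add_char[of b g]
    by (auto simp: entry_set_def mean_char_def atLeast0LessThan of_nat_diff)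
qed

definition entry_box :: "nat \<Rightarrow> 'i set \<Rightarrow> ('i \<Rightarrow> bool) \<Rightarrow> ('i \<Rightarrow> nat) set" where
  "entry_box b F nz = PiE F (\<lambda>x. entry_set b (nz x))"

lemma finite_entry_box: "finite F \<Longrightarrow> finite (entry_box b F nz)"
  by (simp add: entry_box_def finite_PiE)

lemma card_entry_box: "finite F \<Longrightarrow> card (entry_box b F nz) = (\<Prod>x\<in>F. card (entry_set b (nz x)))"
  by (simp add: entry_box_def card_PiE)

lemma card_entry_box_pos: "finite F \<Longrightarrow> b > 1 \<Longrightarrow> card (entry_box b F nz) > 0"
  by (simp add: card_entry_box card_entry_set)

definition linear_solutions ::
  "nat \<Rightarrow> nat \<Rightarrow> 'i set \<Rightarrow> ('i \<Rightarrow> nat \<Rightarrow> nat) \<Rightarrow> ('i \<Rightarrow> bool) \<Rightarrow> ('i \<Rightarrow> nat) set" where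
  "linear_solutions b m F w nz = {\<sigma>\<in>entry_box b F nz. \<forall>r<m. b dvd (\<Sum>x\<in>F. \<sigma> x * w x r)}"

lemma card_linear_solutions_char_sum:
  fixes w :: "'i \<Rightarrow> nat \<Rightarrow> nat"
  assumes b: "b > 1" and F: "finite F"
  shows "real (b ^ m) * card (linear_solutions b m F w nz)
    = card (entry_box b F nz) *
      (\<Sum>\<kappa>\<in>residue_vectors b m. \<Prod>x\<in>F. mean_char b (nz x) (\<Sum>r<m. \<kappa> r * w x r))"
proof -
  define g where "g \<kappa> x = (\<Sum>r<m. \<kappa> r * w x r)" for \<kappa> x
  have indicator: "(if \<forall>r<m. b dvd (\<Sum>x\<in>F. \<sigma> x * w x r) then of_nat (b ^ m) else 0 :: complex)
      = (\<Sum>\<kappa>\<in>residue_vectors b m. \<Prod>x\<in>F. add_char b (\<sigma> x * g \<kappa> x))" for \<sigma>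
  proof -
    have "(\<Sum>r<m. \<kappa> r * (\<Sum>x\<in>F. \<sigma> x * w x r)) = (\<Sum>x\<in>F. \<sigma> x * g \<kappa> x)" for \<kappa>
      unfolding g_def sum_distrib_left by (subst sum.swap) (simp add: mult_ac)
    then show ?thesis
      using b by (simp add: sum_residue_vectors_add_char[symmetric] add_char_sum[symmetric])
  qed
  have "complex_of_real (real (b ^ m) * card {\<sigma>\<in>entry_box b F nz. \<forall>r<m. b dvd (\<Sum>x\<in>F. \<sigma> x * w x r)})
      = (\<Sum>\<sigma>\<in>entry_box b F nz. if \<forall>r<m. b dvd (\<Sum>x\<in>F. \<sigma> x * w x r) then of_nat (b ^ m) else 0)"
    using F by (simp add: sum.If_cases finite_entry_box Int_def conj_commute)
  also have "\<dots> = (\<Sum>\<kappa>\<in>residue_vectors b m. \<Sum>\<sigma>\<in>entry_box b F nz. \<Prod>x\<in>F. add_char b (\<sigma> x * g \<kappa> x))"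
    unfolding indicator by (rule sum.swap)
  also have "\<dots> = (\<Sum>\<kappa>\<in>residue_vectors b m. \<Prod>x\<in>F. \<Sum>a\<in>entry_set b (nz x). add_char b (a * g \<kappa> x))"
    unfolding entry_box_def by (intro sum.cong refl prod_sum_PiE[symmetric] F) simp
  also have "\<dots> = of_real (card (entry_box b F nz) *
      (\<Sum>\<kappa>\<in>residue_vectors b m. \<Prod>x\<in>F. mean_char b (nz x) (g \<kappa> x)))"
    using F by (simp add: sum_entry_set_add_char[OF b] prod.distrib card_entry_box sum_distrib_left)
  finally show ?thesis
    unfolding g_def linear_solutions_def by (simp only: of_real_eq_iff)
qed

lemma entry_box_mono: "(\<And>x. x \<in> F \<Longrightarrow> nz' x \<Longrightarrow> nz x) \<Longrightarrow> entry_box b F nz \<subseteq> entry_box b F nz'"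
  unfolding entry_box_def entry_set_def by (rule PiE_mono) auto

lemma card_entry_box_relax:
  assumes b: "b > 1" and F: "finite F" and weaker: "\<And>x. x \<in> F \<Longrightarrow> nz' x \<Longrightarrow> nz x"
  shows "real (card (entry_box b F nz')) =
         real (card (entry_box b F nz)) * (real b / (real b - 1)) ^ card {x\<in>F. nz x \<and> \<not> nz' x}"
proof -
  have "real (card (entry_set b (nz' x))) =
        real (card (entry_set b (nz x))) * (if nz x \<and> \<not> nz' x then real b / (real b - 1) else 1)"
    if "x \<in> F" for x
    using b weaker[OF that] by (auto simp: card_entry_set of_nat_diff)
  then have "real (card (entry_box b F nz')) =
      real (card (entry_box b F nz)) * (\<Prod>x\<in>F. if nz x \<and> \<not> nz' x then real b / (real b - 1) else 1)"
    using F by (simp add: card_entry_box prod.distrib)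
  also have "(\<Prod>x\<in>F. if nz x \<and> \<not> nz' x then real b / (real b - 1) else 1)
      = (real b / (real b - 1)) ^ card {x\<in>F. nz x \<and> \<not> nz' x}"
    using F by (simp add: prod.If_cases Int_def conj_commute)
  finally show ?thesis .
qed

lemma ratio_entry_box_relax_le:
  assumes b: "b > 1" and F: "finite F" and weaker: "\<And>x. x \<in> F \<Longrightarrow> nz' x \<Longrightarrow> nz x"
  shows "real (card {\<sigma>\<in>entry_box b F nz. P \<sigma>}) / card (entry_box b F nz)
         \<le> (real b / (real b - 1)) ^ card {x\<in>F. nz x \<and> \<not> nz' x} *
            (real (card {\<sigma>\<in>entry_box b F nz'. P \<sigma>}) / card (entry_box b F nz'))"
proof -
  have "card {\<sigma>\<in>entry_box b F nz. P \<sigma>} \<le> card {\<sigma>\<in>entry_box b F nz'. P \<sigma>}"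
    using entry_box_mono[of F nz' nz b] weaker F by (intro card_mono) (auto simp: finite_entry_box)
  then have "real (card {\<sigma>\<in>entry_box b F nz. P \<sigma>}) / card (entry_box b F nz)
      \<le> real (card {\<sigma>\<in>entry_box b F nz'. P \<sigma>}) / card (entry_box b F nz)"
    by (simp add: divide_right_mono)
  also have "\<dots> = (real b / (real b - 1)) ^ card {x\<in>F. nz x \<and> \<not> nz' x} *
      (real (card {\<sigma>\<in>entry_box b F nz'. P \<sigma>}) / card (entry_box b F nz'))"
  proof -
    define q where "q = (real b / (real b - 1)) ^ card {x\<in>F. nz x \<and> \<not> nz' x}"
    have "q > 0" using b by (simp add: q_def)
    then show ?thesis
      using card_entry_box_pos[OF F b, of nz] card_entry_box_relax[where nz = nz and nz' = nz', OF b F weaker]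
      unfolding q_def[symmetric] by (simp add: field_simps)
  qed
  finally show ?thesis .
qed

section \<open>Digits and elementary intervals\<close>

lemma digit_less: "b > 0 \<Longrightarrow> digit b k i < b"
  unfolding digit_def by simp

lemma mod_power_eq_sum_digit: "b > 0 \<Longrightarrow> k mod b ^ m = (\<Sum>i<m. digit b k i * b ^ i)"
proof (induction m)
  case (Suc m)
  have "k mod b ^ Suc m = k mod (b ^ m * b)"
    by (simp add: mult.commute)
  also have "\<dots> = b ^ m * (k div b ^ m mod b) + k mod b ^ m"
    by (rule mod_mult2_eq)
  finally show ?case using Suc by (simp add: digit_def mult.commute)
qed simp

lemma digit_eq_0_if_less_power:
  assumes "b > 0" "k < b ^ N" "N \<le> i"
  shows "digit b k i = 0"
proof -
  have "b ^ N \<le> b ^ i"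
    using assms by (simp add: power_increasing)
  then show ?thesis
    using assms by (simp add: digit_def)
qed

lemma top_digit_exists:
  assumes "b > 1" and "k > 0"
  shows "\<exists>d. b ^ d \<le> k \<and> k < b ^ Suc d \<and> digit b k d \<noteq> 0 \<and> (\<forall>i>d. digit b k i = 0)"
proof -
  obtain d where d: "b ^ d \<le> k" "k < b ^ Suc d"
    using ex_power_ivl1[of b k] assms by auto
  have "k div b ^ d < b"
    using d(2) less_mult_imp_div_less[of k b "b ^ d"] by simp
  moreover have "k div b ^ d \<ge> 1"
    using div_le_mono[OF d(1), of "b ^ d"] assms by simp
  ultimately have "digit b k d \<noteq> 0"
    by (simp add: digit_def)
  moreover have "digit b k i = 0" if "d < i" for i
    using digit_eq_0_if_less_power[OF _ d(2)] assms that by simp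
  ultimately show ?thesis
    using d by blast
qed

lemma top_digit_less:
  assumes b: "b > 1" and k: "k > 0" "k < b ^ m"
  shows "\<exists>d<m. digit b k d \<noteq> 0 \<and> (\<forall>i>d. digit b k i = 0)"
proof -
  obtain d where d: "b ^ d \<le> k" "digit b k d \<noteq> 0" "\<forall>i>d. digit b k i = 0"
    using top_digit_exists[OF b k(1)] by blast
  have "b ^ d < b ^ m"
    using d(1) k(2) by linarith
  then have "d < m"
    using b power_less_imp_less_exp by blast
  then show ?thesis
    using d by blast
qed

definition digit_vector :: "nat \<Rightarrow> nat \<Rightarrow> nat \<Rightarrow> nat \<Rightarrow> nat" where
  "digit_vector b m k = restrict (digit b k) {..<m}"

lemma bij_betw_digit_vector:
  assumes "b > 0"
  shows "bij_betw (digit_vector b m) {..<b ^ m} (residue_vectors b m)"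
proof -
  have inj: "inj_on (digit_vector b m) {..<b ^ m}"
  proof (rule inj_onI)
    fix x y assume x: "x \<in> {..<b ^ m}" and y: "y \<in> {..<b ^ m}"
      and eq: "digit_vector b m x = digit_vector b m y"
    have "\<forall>i<m. digit b x i = digit b y i"
      using eq unfolding digit_vector_def by (metis lessThan_iff restrict_apply')
    then have "x mod b ^ m = y mod b ^ m"
      by (simp add: mod_power_eq_sum_digit[OF assms])
    then show "x = y" using x y by simp
  qed
  have "digit_vector b m k \<in> residue_vectors b m" for k
    unfolding digit_vector_def residue_vectors_def restrict_PiE_iff using assms by (simp add: digit_less)
  then have sub: "digit_vector b m ` {..<b ^ m} \<subseteq> residue_vectors b m"
    by auto
  have "digit_vector b m ` {..<b ^ m} = residue_vectors b m"
    using sub card_image[OF inj] by (intro card_subset_eq) (simp_all add: card_residue_vectors)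
  with inj show ?thesis
    by (simp add: bij_betw_def)
qed

lemma card_digit_vector_Collect:
  assumes "b > 0"
  shows "card {k. k < b ^ m \<and> P (digit_vector b m k)} = card {\<kappa>\<in>residue_vectors b m. P \<kappa>}"
proof -
  have "bij_betw (digit_vector b m) {k\<in>{..<b ^ m}. P (digit_vector b m k)} {\<kappa>\<in>residue_vectors b m. P \<kappa>}"
    by (rule bij_betw_Collect[OF bij_betw_digit_vector[OF assms]]) simp
  then show ?thesis
    by (simp add: bij_betw_same_card)
qed

text \<open>The digits \<open>\<delta> 0, \<dots>, \<delta> (a - 1)\<close> read as a base-\<open>b\<close> numeral, most significant first.\<close>

fun horner :: "nat \<Rightarrow> (nat \<Rightarrow> nat) \<Rightarrow> nat \<Rightarrow> nat" where
  "horner b \<delta> 0 = 0"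
| "horner b \<delta> (Suc a) = horner b \<delta> a * b + \<delta> a"

lemma horner_cong: "(\<And>i. i < a \<Longrightarrow> \<delta> i = \<epsilon> i) \<Longrightarrow> horner b \<delta> a = horner b \<epsilon> a"
  by (induction a) auto

lemma horner_less: "(\<And>i. i < a \<Longrightarrow> \<delta> i < b) \<Longrightarrow> horner b \<delta> a < b ^ a"
proof (induction a)
  case (Suc a)
  then have "horner b \<delta> a + 1 \<le> b ^ a"
    by fastforce
  then have "(horner b \<delta> a + 1) * b \<le> b ^ a * b"
    by (rule mult_le_mono1)
  moreover have "\<delta> a < b"
    using Suc by simp
  ultimately show ?case by (simp add: algebra_simps)
qed simp

lemma horner_add: "horner b \<delta> (a + n) = horner b \<delta> a * b ^ n + horner b (\<lambda>i. \<delta> (a + i)) n"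
  by (induction n) (simp_all add: algebra_simps)

lemma horner_inj:
  assumes "\<And>i. i < a \<Longrightarrow> \<delta> i < b" "\<And>i. i < a \<Longrightarrow> \<epsilon> i < b" "horner b \<delta> a = horner b \<epsilon> a"
  shows "i < a \<Longrightarrow> \<delta> i = \<epsilon> i"
  using assms
proof (induction a arbitrary: i)
  case (Suc a)
  have "b > 0"
    using Suc.prems(2)[of a] by simp
  have last: "\<delta> a = \<epsilon> a"
    using arg_cong[OF Suc.prems(4), of "\<lambda>x. x mod b"] Suc.prems(2,3) by simp
  then have "horner b \<delta> a = horner b \<epsilon> a"
    using Suc.prems(4) \<open>b > 0\<close> by simp
  with Suc last show ?case
    by (cases "i = a") auto
qed simp

lemma sum_digits_eq_horner:
  "b > 0 \<Longrightarrow> (\<Sum>i<m. real (\<delta> i) / real b ^ Suc i) = real (horner b \<delta> m) / real b ^ m"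
  by (induction m) (simp_all add: field_simps)

lemma interval_iff_div_eq:
  fixes X c p q :: nat
  assumes "p > 0" "q > 0"
  shows "(real c / p \<le> real X / (p * q) \<and> real X / (p * q) < real (c + 1) / p) \<longleftrightarrow> X div q = c"
proof -
  have "(real c / p \<le> real X / (p * q) \<and> real X / (p * q) < real (c + 1) / p)
        \<longleftrightarrow> real c \<le> real X / q \<and> real X / q < real c + 1"
    using assms by (simp add: field_simps)
  also have "\<dots> \<longleftrightarrow> \<lfloor>real X / real q\<rfloor> = int c"
    by (simp add: floor_eq_iff)
  also have "\<dots> \<longleftrightarrow> X div q = c"
    by (simp add: floor_divide_of_nat_eq)
  finally show ?thesis .
qed

lemma elementary_interval_iff_digits:
  assumes b: "b > 0" and a: "a \<le> m"
    and \<delta>: "\<And>i. i < m \<Longrightarrow> \<delta> i < b" and \<epsilon>: "\<And>i. i < a \<Longrightarrow> \<epsilon> i < b"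
  defines "x \<equiv> \<Sum>i<m. real (\<delta> i) / real b ^ Suc i"
  shows "(real (horner b \<epsilon> a) / real b ^ a \<le> x \<and> x < real (horner b \<epsilon> a + 1) / real b ^ a)
         \<longleftrightarrow> (\<forall>i<a. \<delta> i = \<epsilon> i)"
proof -
  have split: "horner b \<delta> m = horner b \<delta> a * b ^ (m - a) + horner b (\<lambda>i. \<delta> (a + i)) (m - a)"
    using horner_add[of b \<delta> a "m - a"] a by simp
  have "horner b (\<lambda>i. \<delta> (a + i)) (m - a) < b ^ (m - a)"
    using \<delta> a by (intro horner_less) auto
  then have "horner b \<delta> m div b ^ (m - a) = horner b \<delta> a"
    unfolding split using b by simp
  moreover have "real b ^ m = real b ^ a * real b ^ (m - a)"
    using a by (metis le_add_diff_inverse power_add)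
  then have "x = real (horner b \<delta> m) / (real b ^ a * real b ^ (m - a))"
    by (simp only: x_def sum_digits_eq_horner[OF b])
  ultimately have "(real (horner b \<epsilon> a) / real b ^ a \<le> x \<and> x < real (horner b \<epsilon> a + 1) / real b ^ a)
      \<longleftrightarrow> horner b \<delta> a = horner b \<epsilon> a"
    using interval_iff_div_eq[of "b ^ a" "b ^ (m - a)" "horner b \<epsilon> a" "horner b \<delta> m"] b
    by (simp only: of_nat_mult of_nat_power zero_less_power)
  also have "\<dots> \<longleftrightarrow> (\<forall>i<a. \<delta> i = \<epsilon> i)"
    using horner_inj[of a \<delta> b \<epsilon>] \<delta> \<epsilon> a horner_cong[of a \<delta> \<epsilon> b] by auto
  finally show ?thesis .
qed

section \<open>Row kernels of a digital net\<close>

definition mat_vec :: "nat \<Rightarrow> (nat \<Rightarrow> nat \<Rightarrow> nat) \<Rightarrow> nat \<Rightarrow> (nat \<Rightarrow> nat) \<Rightarrow> nat" where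
  "mat_vec m A i \<kappa> = (\<Sum>l<m. A i l * \<kappa> l)"

lemma mat_vec_cong: "(\<And>l. l < m \<Longrightarrow> \<kappa> l = \<kappa>' l) \<Longrightarrow> mat_vec m A i \<kappa> = mat_vec m A i \<kappa>'"
  unfolding mat_vec_def by simp

lemma mat_vec_add_mult_mod:
  "mat_vec m A i (\<lambda>l. (\<kappa> l + c * \<kappa>' l) mod b) mod b = (mat_vec m A i \<kappa> + c * mat_vec m A i \<kappa>') mod b"
proof -
  have "mat_vec m A i (\<lambda>l. (\<kappa> l + c * \<kappa>' l) mod b) mod b = (\<Sum>l<m. A i l * (\<kappa> l + c * \<kappa>' l)) mod b"
    unfolding mat_vec_def by (subst (1 2) mod_sum_eq[symmetric]) (simp add: mod_mult_right_eq)
  also have "(\<Sum>l<m. A i l * (\<kappa> l + c * \<kappa>' l)) = mat_vec m A i \<kappa> + c * mat_vec m A i \<kappa>'"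
    unfolding mat_vec_def by (simp add: sum.distrib sum_distrib_left algebra_simps)
  finally show ?thesis .
qed

lemma card_net_row_values:
  assumes b: "b > 1" and net: "is_net b t m u (net_point b m C)" and u: "finite u"
    and a: "(\<Sum>j\<in>u. a j) + t = m" and e: "\<And>j i. j \<in> u \<Longrightarrow> i < a j \<Longrightarrow> e j i < b"
  shows "card {\<kappa>\<in>residue_vectors b m. \<forall>j\<in>u. \<forall>i<a j. mat_vec m (C j) i \<kappa> mod b = e j i} = b ^ t"
proof -
  define c where "c j = horner b (e j) (a j)" for j
  define P where "P \<kappa> \<longleftrightarrow> (\<forall>j\<in>u. \<forall>i<a j. mat_vec m (C j) i \<kappa> mod b = e j i)" for \<kappa>
  have am: "a j \<le> m" if "j \<in> u" for j
    using member_le_sum[OF that, of a, OF _ u] a by auto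
  have "\<forall>j\<in>u. c j < b ^ a j"
    unfolding c_def using e by (auto intro!: horner_less)
  then have "card {k. k < b ^ m \<and> (\<forall>j\<in>u. real (c j) / real b ^ a j \<le> net_point b m C k j
                                   \<and> net_point b m C k j < real (c j + 1) / real b ^ a j)} = b ^ t"
    using net a unfolding is_net_def by blast
  also have "{k. k < b ^ m \<and> (\<forall>j\<in>u. real (c j) / real b ^ a j \<le> net_point b m C k j
                                   \<and> net_point b m C k j < real (c j + 1) / real b ^ a j)}
     = {k. k < b ^ m \<and> P (digit_vector b m k)}"
  proof -
    have point: "net_point b m C k j = (\<Sum>i<m. real (mat_vec m (C j) i (digit_vector b m k) mod b) / real b ^ Suc i)"
      for k j
      unfolding net_point_def mat_vec_def digit_vector_def by simp
    have "(real (c j) / real b ^ a j \<le> net_point b m C k j \<and> net_point b m C k j < real (c j + 1) / real b ^ a j)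
          \<longleftrightarrow> (\<forall>i<a j. mat_vec m (C j) i (digit_vector b m k) mod b = e j i)" if "j \<in> u" for k j
      unfolding point c_def by (rule elementary_interval_iff_digits) (use b am[OF that] e[OF that] in auto)
    then show ?thesis
      unfolding P_def by auto
  qed
  also have "card {k. k < b ^ m \<and> P (digit_vector b m k)} = card {\<kappa>\<in>residue_vectors b m. P \<kappa>}"
    using b by (intro card_digit_vector_Collect) simp
  finally show ?thesis
    unfolding P_def .
qed

definition row_kernel ::
  "nat \<Rightarrow> nat \<Rightarrow> (nat \<Rightarrow> nat \<Rightarrow> nat \<Rightarrow> nat) \<Rightarrow> nat set \<Rightarrow> (nat \<Rightarrow> nat) \<Rightarrow> (nat \<Rightarrow> nat) set" where
  "row_kernel b m C u n = {\<kappa>\<in>residue_vectors b m. \<forall>j\<in>u. \<forall>i<n j. b dvd mat_vec m (C j) i \<kappa>}"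

lemma finite_row_kernel [simp]: "finite (row_kernel b m C u n)"
  unfolding row_kernel_def by simp

lemma row_kernel_antimono: "(\<And>j. j \<in> u \<Longrightarrow> n j \<le> n' j) \<Longrightarrow> row_kernel b m C u n' \<subseteq> row_kernel b m C u n"
  unfolding row_kernel_def by fastforce

lemma obtain_sum_le_eq:
  fixes f :: "'a \<Rightarrow> nat"
  assumes "finite U" "k \<le> (\<Sum>j\<in>U. f j)"
  obtains a where "\<And>j. j \<in> U \<Longrightarrow> a j \<le> f j" "(\<Sum>j\<in>U. a j) = k"
  using assms
proof (induction U arbitrary: k thesis rule: finite_induct)
  case (insert x U)
  obtain a where a: "\<And>j. j \<in> U \<Longrightarrow> a j \<le> f j" "(\<Sum>j\<in>U. a j) = min k (\<Sum>j\<in>U. f j)"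
    using insert.IH[of "min k (\<Sum>j\<in>U. f j)"] by auto
  define a' where "a' = a(x := k - min k (\<Sum>j\<in>U. f j))"
  have "(\<Sum>j\<in>U. a' j) = (\<Sum>j\<in>U. a j)"
    unfolding a'_def using insert.hyps by (intro sum.cong) auto
  then show ?case
    using insert a by (intro insert.prems(1)[of a']) (auto simp: a'_def)
qed simp

lemma card_row_kernel_le:
  assumes b: "b > 1" and net: "is_net b t m u (net_point b m C)" and u: "finite u"
    and n: "m \<le> (\<Sum>j\<in>u. n j) + t"
  shows "card (row_kernel b m C u n) \<le> b ^ t"
proof (cases "t \<le> m")
  case True
  obtain a where a: "\<And>j. j \<in> u \<Longrightarrow> a j \<le> n j" "(\<Sum>j\<in>u. a j) = m - t"
    by (rule obtain_sum_le_eq[OF u, of "m - t" n]) (use n in auto)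
  have "row_kernel b m C u n \<subseteq> {\<kappa>\<in>residue_vectors b m. \<forall>j\<in>u. \<forall>i<a j. mat_vec m (C j) i \<kappa> mod b = 0}"
    using a(1) unfolding row_kernel_def by fastforce
  then have "card (row_kernel b m C u n) \<le> card {\<kappa>\<in>residue_vectors b m. \<forall>j\<in>u. \<forall>i<a j. mat_vec m (C j) i \<kappa> mod b = 0}"
    by (intro card_mono) simp_all
  also have "\<dots> = b ^ t"
    using b net u a(2) True by (intro card_net_row_values) auto
  finally show ?thesis .
next
  case False
  have "card (row_kernel b m C u n) \<le> card (residue_vectors b m)"
    unfolding row_kernel_def by (intro card_mono) auto
  also have "\<dots> \<le> b ^ t"
    using False b by (simp add: card_residue_vectors power_increasing)
  finally show ?thesis .
qed

lemma mod_add_right_cancel_nat: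
  fixes x y c b :: nat
  assumes "(x + c) mod b = (y + c) mod b"
  shows "x mod b = y mod b"
proof -
  have "int (x + c) mod int b = int (y + c) mod int b"
    using assms by (metis of_nat_mod)
  then have "int x mod int b = int y mod int b"
    by (metis add_diff_cancel_right' mod_diff_left_eq of_nat_add)
  then show ?thesis
    by (metis of_nat_eq_iff of_nat_mod)
qed

lemma row_kernel_pivot_exists:
  assumes b: "b > 1" and net: "is_net b t m u (net_point b m C)" and u: "finite u"
    and j0: "j0 \<in> u" and n: "(\<Sum>j\<in>u. n j) + t < m"
  shows "\<exists>\<kappa>\<in>residue_vectors b m. (\<forall>j\<in>u. \<forall>i<n j. b dvd mat_vec m (C j) i \<kappa>)
           \<and> mat_vec m (C j0) (n j0) \<kappa> mod b = 1"
proof -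
  define a where "a j = n j + (if j = j0 then m - t - (\<Sum>j\<in>u. n j) else 0)" for j
  define e :: "nat \<Rightarrow> nat \<Rightarrow> nat" where "e j i = (if j = j0 \<and> i = n j0 then 1 else 0)" for j i
  have "(\<Sum>j\<in>u. a j) = (\<Sum>j\<in>u. n j) + (m - t - (\<Sum>j\<in>u. n j))"
    unfolding a_def sum.distrib using u j0 by (simp add: sum.delta)
  then have "card {\<kappa>\<in>residue_vectors b m. \<forall>j\<in>u. \<forall>i<a j. mat_vec m (C j) i \<kappa> mod b = e j i} = b ^ t"
    using b net u n by (intro card_net_row_values) (auto simp: e_def)
  then have "{\<kappa>\<in>residue_vectors b m. \<forall>j\<in>u. \<forall>i<a j. mat_vec m (C j) i \<kappa> mod b = e j i} \<noteq> {}"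
    using b by (intro notI) simp
  then obtain \<kappa> where \<kappa>: "\<kappa> \<in> residue_vectors b m"
    "\<And>j i. j \<in> u \<Longrightarrow> i < a j \<Longrightarrow> mat_vec m (C j) i \<kappa> mod b = e j i"
    by blast
  have "b dvd mat_vec m (C j) i \<kappa>" if "j \<in> u" "i < n j" for j i
    using \<kappa>(2)[OF that(1), of i] that by (auto simp: a_def e_def dvd_eq_mod_eq_0)
  moreover have "mat_vec m (C j0) (n j0) \<kappa> mod b = 1"
    using \<kappa>(2)[OF j0, of "n j0"] n b by (simp add: a_def e_def)
  ultimately show ?thesis
    using \<kappa>(1) by blast
qed

lemma card_row_kernel_extra_row:
  assumes b: "b > 1" and net: "is_net b t m u (net_point b m C)" and u: "finite u"
    and j0: "j0 \<in> u" and n: "(\<Sum>j\<in>u. n j) + t < m"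
  shows "b * card (row_kernel b m C u (n(j0 := Suc (n j0)))) \<le> card (row_kernel b m C u n)"
proof -
  obtain \<kappa>s where \<kappa>s: "\<kappa>s \<in> residue_vectors b m"
    and \<kappa>s_old: "\<And>j i. j \<in> u \<Longrightarrow> i < n j \<Longrightarrow> b dvd mat_vec m (C j) i \<kappa>s"
    and \<kappa>s_new: "mat_vec m (C j0) (n j0) \<kappa>s mod b = 1"
    using row_kernel_pivot_exists[OF b net u j0 n] by blast
  define Z0 where "Z0 = row_kernel b m C u n"
  define Z where "Z = row_kernel b m C u (n(j0 := Suc (n j0)))"
  \<comment> \<open>\<open>(\<kappa>, c) \<mapsto> \<kappa> + c \<kappa>s\<close> injects \<open>Z \<times> {..<b}\<close> into \<open>Z0\<close>:
    \<open>\<kappa>s\<close> vanishes on the rows of \<open>Z0\<close> and is 1 on the extra row\<close>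
  define \<Theta> where "\<Theta> p = restrict (\<lambda>l. (fst p l + snd p * \<kappa>s l) mod b) {..<m}" for p :: "(nat \<Rightarrow> nat) \<times> nat"
  have row_\<Theta>: "mat_vec m A i (\<Theta> (\<kappa>, c)) mod b = (mat_vec m A i \<kappa> + c * mat_vec m A i \<kappa>s) mod b" for A i \<kappa> c
    unfolding \<Theta>_def by (subst mat_vec_cong[of m _ "\<lambda>l. (\<kappa> l + c * \<kappa>s l) mod b"]) (auto simp: mat_vec_add_mult_mod)
  have "\<Theta> ` (Z \<times> {..<b}) \<subseteq> Z0"
  proof clarify
    fix \<kappa> c assume \<kappa>: "\<kappa> \<in> Z"
    have "b dvd mat_vec m (C j) i (\<Theta> (\<kappa>, c))" if "j \<in> u" "i < n j" for j i
    proof -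
      have "b dvd mat_vec m (C j) i \<kappa>"
        using \<kappa> that unfolding Z_def row_kernel_def by (auto split: if_splits)
      then show ?thesis
        using \<kappa>s_old[OF that] row_\<Theta>[of "C j" i \<kappa> c]
        by (simp add: dvd_eq_mod_eq_0 mod_add_eq[symmetric] mod_mult_right_eq[symmetric])
    qed
    moreover have "\<Theta> (\<kappa>, c) \<in> residue_vectors b m"
      using b unfolding \<Theta>_def residue_vectors_def by auto
    ultimately show "\<Theta> (\<kappa>, c) \<in> Z0"
      unfolding Z0_def row_kernel_def by blast
  qed
  moreover have "inj_on \<Theta> (Z \<times> {..<b})"
  proof (rule inj_onI, clarify)
    fix \<kappa> c \<kappa>' c' assume \<kappa>: "\<kappa> \<in> Z" "\<kappa>' \<in> Z" and c: "c < b" "c' < b"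
      and eq: "\<Theta> (\<kappa>, c) = \<Theta> (\<kappa>', c')"
    have new_row: "mat_vec m (C j0) (n j0) (\<Theta> (\<kappa>, c)) mod b = c mod b" if "\<kappa> \<in> Z" for \<kappa> c
    proof -
      have "mat_vec m (C j0) (n j0) \<kappa> mod b = 0"
        using that j0 unfolding Z_def row_kernel_def by auto
      then show ?thesis
        using row_\<Theta>[of "C j0" "n j0" \<kappa> c] \<kappa>s_new by (metis add_0 mod_add_left_eq mod_mult_right_eq mult.right_neutral)
    qed
    have "c = c'"
      using new_row[OF \<kappa>(1), of c] new_row[OF \<kappa>(2), of c'] eq c by simp
    have \<kappa>_vec: "\<kappa> \<in> residue_vectors b m" "\<kappa>' \<in> residue_vectors b m"
      using \<kappa> unfolding Z_def row_kernel_def by auto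
    have "\<kappa> l = \<kappa>' l" for l
    proof (cases "l < m")
      case True
      then have "(\<kappa> l + c * \<kappa>s l) mod b = (\<kappa>' l + c * \<kappa>s l) mod b"
        using fun_cong[OF eq, of l] \<open>c = c'\<close> unfolding \<Theta>_def by simp
      then have "\<kappa> l mod b = \<kappa>' l mod b"
        by (rule mod_add_right_cancel_nat)
      then show ?thesis
        using \<kappa>_vec True residue_vectors_less by (metis mod_less)
    next
      case False
      then show ?thesis
        using \<kappa>_vec unfolding residue_vectors_def by (auto simp: PiE_iff extensional_def)
    qed
    with \<open>c = c'\<close> show "\<kappa> = \<kappa>' \<and> c = c'"
      by auto
  qed
  ultimately have "card (Z \<times> {..<b}) \<le> card Z0"
    by (intro card_inj_on_le) (simp_all add: Z0_def)
  then show ?thesis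
    by (simp add: Z_def Z0_def card_cartesian_product mult.commute)
qed

lemma signed_card_row_kernel_le:
  fixes n :: "nat \<Rightarrow> nat"
  assumes b: "b > 1" and net: "is_net b t m u (net_point b m C)" and u: "finite u" and j0: "j0 \<in> u"
  defines "Z0 \<equiv> row_kernel b m C u n" and "Z \<equiv> row_kernel b m C u (n(j0 := Suc (n j0)))"
  shows "real (card Z) - real (card (Z0 - Z)) / (real b - 1) \<le> real b ^ t"
proof -
  have ZZ0: "Z \<subseteq> Z0"
    unfolding Z_def Z0_def by (rule row_kernel_antimono) simp
  have nonneg: "real (card (Z0 - Z)) / (real b - 1) \<ge> 0"
    using b by simp
  show ?thesis
  proof (cases "(\<Sum>j\<in>u. n j) + t < m")
    case True
    have "b * card Z \<le> card Z0"
      unfolding Z_def Z0_def using card_row_kernel_extra_row[OF b net u j0 True] .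
    then have "real b * real (card Z) \<le> real (card Z0)"
      by (metis of_nat_le_iff of_nat_mult)
    moreover have "real (card (Z0 - Z)) = real (card Z0) - real (card Z)"
      using ZZ0 card_mono[OF _ ZZ0] by (simp add: card_Diff_subset of_nat_diff Z0_def Z_def)
    ultimately have "(real b - 1) * real (card Z) \<le> real (card (Z0 - Z))"
      by (simp add: algebra_simps)
    then have "real (card Z) - real (card (Z0 - Z)) / (real b - 1) \<le> 0"
      using b by (simp add: field_simps)
    then show ?thesis
      by (smt (verit) zero_le_power of_nat_0_le_iff)
  next
    case False
    have "(\<Sum>j\<in>u. n j) \<le> (\<Sum>j\<in>u. (n(j0 := Suc (n j0))) j)"
      by (intro sum_mono) simp
    then have "card Z \<le> b ^ t"
      unfolding Z_def using False by (intro card_row_kernel_le[OF b net u]) simp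
    then show ?thesis
      using nonneg by (smt (verit) of_nat_le_iff of_nat_power)
  qed
qed

section \<open>The dual condition as a linear system\<close>

text \<open>
  The index \<open>(j, i, l)\<close> stands for the entry \<open>L\<^sub>j(i, l)\<close>; rows \<open>i \<ge> N\<close> are irrelevant when all
  \<open>k\<^sub>j < b\<^sup>N\<close>. The \<open>r\<close>-th coordinate of \<open>\<Sum>\<^sub>j (L\<^sub>j C\<^sub>j)\<^sup>T k\<^sub>j\<close> is
  \<open>\<Sum>\<^sub>x L(x) * dual_weight b C k x r\<close>.
\<close>

definition dual_index :: "nat \<Rightarrow> nat \<Rightarrow> nat \<Rightarrow> (nat \<times> nat \<times> nat) set" where
  "dual_index s m N = (SIGMA j:{1..s}. SIGMA i:{..<N}. {l. l < m \<and> l \<le> i})"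

definition dual_weight ::
  "nat \<Rightarrow> (nat \<Rightarrow> nat \<Rightarrow> nat \<Rightarrow> nat) \<Rightarrow> (nat \<Rightarrow> nat) \<Rightarrow> nat \<times> nat \<times> nat \<Rightarrow> nat \<Rightarrow> nat" where
  "dual_weight b C k = (\<lambda>(j, i, l) r. C j l r * digit b (k j) i)"

definition on_diagonal :: "nat \<times> nat \<times> nat \<Rightarrow> bool" where
  "on_diagonal = (\<lambda>(j, i, l). i = l)"

lemma finite_dual_index [simp]: "finite (dual_index s m N)"
  unfolding dual_index_def by (intro finite_SigmaI) auto

lemma dual_index_subset_L_index: "dual_index s m N \<subseteq> L_index m s"
  unfolding dual_index_def L_index_def by auto

lemma L_measure_eq_PiM_entry_set:
  "L_measure b m s = PiM (L_index m s) (\<lambda>x. measure_pmf (pmf_of_set (entry_set b (on_diagonal x))))"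
  unfolding L_measure_def entry_set_def on_diagonal_def by (simp add: case_prod_beta')

lemma sum_dual_weight:
  "(\<Sum>r<m. \<kappa> r * dual_weight b C k (j, i, l) r) = digit b (k j) i * mat_vec m (C j) l \<kappa>"
  unfolding dual_weight_def mat_vec_def by (simp add: sum_distrib_left mult_ac)

lemma mod_sum_cong:
  fixes f g :: "'a \<Rightarrow> nat"
  assumes "\<And>x. x \<in> A \<Longrightarrow> f x mod b = g x mod b"
  shows "(\<Sum>x\<in>A. f x) mod b = (\<Sum>x\<in>A. g x) mod b"
  by (metis (mono_tags, lifting) assms mod_sum_eq sum.cong)

lemma sum_Sigma_Sigma:
  assumes "finite A" "\<And>a. a \<in> A \<Longrightarrow> finite (B a)" "\<And>a b. finite (C a b)"
  shows "(\<Sum>x\<in>(SIGMA a:A. SIGMA b:B a. C a b). f x) = (\<Sum>a\<in>A. \<Sum>b\<in>B a. \<Sum>c\<in>C a b. f (a, b, c))"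
proof -
  have "(\<Sum>a\<in>A. \<Sum>b\<in>B a. \<Sum>c\<in>C a b. f (a, b, c)) = (\<Sum>a\<in>A. \<Sum>p\<in>Sigma (B a) (C a). f (a, p))"
    using assms by (intro sum.cong refl) (simp add: sum.Sigma split_def)
  also have "\<dots> = (\<Sum>x\<in>(SIGMA a:A. SIGMA b:B a. C a b). f x)"
    using assms by (simp add: sum.Sigma split_def finite_SigmaI)
  finally show ?thesis ..
qed

lemma in_dual_iff_linear:
  assumes b: "b > 0" and k: "\<forall>j\<in>{1..s}. k j < b ^ N"
  shows "in_dual b m s (\<lambda>j. mat_prod b m (L_of m \<omega> j) (C j)) k \<longleftrightarrow>
         (\<forall>r<m. b dvd (\<Sum>x\<in>dual_index s m N. \<omega> x * dual_weight b C k x r))"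
proof -
  have row_sum: "(\<Sum>i\<in>{i. digit b (k j) i \<noteq> 0}. (\<Sum>l<m. L_of m \<omega> j i l * C j l r) * digit b (k j) i)
      = (\<Sum>i<N. \<Sum>l\<in>{l. l < m \<and> l \<le> i}. \<omega> (j, i, l) * dual_weight b C k (j, i, l) r)"
    if j: "j \<in> {1..s}" for j r
  proof -
    have "k j < b ^ N"
      using k j by blast
    have "{i. digit b (k j) i \<noteq> 0} \<subseteq> {..<N}"
    proof
      fix i assume "i \<in> {i. digit b (k j) i \<noteq> 0}"
      then show "i \<in> {..<N}"
        using digit_eq_0_if_less_power[OF b \<open>k j < b ^ N\<close>, of i] by (cases "N \<le> i") auto
    qed
    then have "(\<Sum>i\<in>{i. digit b (k j) i \<noteq> 0}. (\<Sum>l<m. L_of m \<omega> j i l * C j l r) * digit b (k j) i)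
        = (\<Sum>i<N. (\<Sum>l<m. L_of m \<omega> j i l * C j l r) * digit b (k j) i)"
      by (intro sum.mono_neutral_left) auto
    also have "\<dots> = (\<Sum>i<N. \<Sum>l\<in>{l\<in>{..<m}. l \<le> i}. \<omega> (j, i, l) * dual_weight b C k (j, i, l) r)"
      unfolding sum_distrib_right sum.inter_filter[OF finite_lessThan]
      by (intro sum.cong refl) (auto simp: L_of_def dual_weight_def)
    finally show ?thesis by simp
  qed
  have "(\<Sum>j\<in>{1..s}. \<Sum>i\<in>{i. digit b (k j) i \<noteq> 0}. mat_prod b m (L_of m \<omega> j) (C j) i r * digit b (k j) i) mod b
      = (\<Sum>x\<in>dual_index s m N. \<omega> x * dual_weight b C k x r) mod b" for r
  proof -
    have "(\<Sum>j\<in>{1..s}. \<Sum>i\<in>{i. digit b (k j) i \<noteq> 0}. mat_prod b m (L_of m \<omega> j) (C j) i r * digit b (k j) i) mod b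
      = (\<Sum>j\<in>{1..s}. \<Sum>i\<in>{i. digit b (k j) i \<noteq> 0}. (\<Sum>l<m. L_of m \<omega> j i l * C j l r) * digit b (k j) i) mod b"
      unfolding mat_prod_def by (intro mod_sum_cong) (simp add: mod_mult_left_eq)
    also have "(\<Sum>j\<in>{1..s}. \<Sum>i\<in>{i. digit b (k j) i \<noteq> 0}. (\<Sum>l<m. L_of m \<omega> j i l * C j l r) * digit b (k j) i)
      = (\<Sum>x\<in>dual_index s m N. \<omega> x * dual_weight b C k x r)"
      unfolding dual_index_def using row_sum by (simp add: sum_Sigma_Sigma)
    finally show ?thesis .
  qed
  then show ?thesis
    unfolding in_dual_def by (simp add: dvd_eq_mod_eq_0)
qed

section \<open>The two estimates\<close>

definition prob_in_dual :: "nat \<Rightarrow> nat \<Rightarrow> nat \<Rightarrow> (nat \<Rightarrow> nat \<Rightarrow> nat \<Rightarrow> nat) \<Rightarrow> (nat \<Rightarrow> nat) \<Rightarrow> real" where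
  "prob_in_dual b m s C k = measure (L_measure b m s)
     {\<omega> \<in> space (L_measure b m s). in_dual b m s (\<lambda>j. mat_prod b m (L_of m \<omega> j) (C j)) k}"

lemma prob_in_dual_eq_ratio:
  assumes b: "b > 1" and k: "\<forall>j\<in>{1..s}. k j < b ^ N"
  shows "prob_in_dual b m s C k
         = card (linear_solutions b m (dual_index s m N) (dual_weight b C k) on_diagonal)
           / card (entry_box b (dual_index s m N) on_diagonal)"
proof -
  have b0: "b > 0" using b by simp
  show ?thesis
    unfolding prob_in_dual_def L_measure_eq_PiM_entry_set linear_solutions_def entry_box_def
      in_dual_iff_linear[OF b0 k]
    by (rule measure_PiM_pmf_of_set_finite_dependence[OF finite_dual_index dual_index_subset_L_index])
      (use b in \<open>simp_all add: entry_set_ne\<close>)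
qed

lemma prob_in_dual_char_sum:
  assumes b: "b > 1" and k: "\<forall>j\<in>{1..s}. k j < b ^ N"
  shows "real (b ^ m) * prob_in_dual b m s C k
         = (\<Sum>\<kappa>\<in>residue_vectors b m. \<Prod>x\<in>dual_index s m N.
              mean_char b (on_diagonal x) (\<Sum>r<m. \<kappa> r * dual_weight b C k x r))"
  using card_linear_solutions_char_sum[OF b finite_dual_index] card_entry_box_pos[OF finite_dual_index b]
  unfolding prob_in_dual_eq_ratio[OF b k] by (simp add: field_simps)

lemma prob_in_dual_le_relaxed_char_sum:
  assumes b: "b > 1" and k: "\<forall>j\<in>{1..s}. k j < b ^ N"
    and nz: "\<And>x. x \<in> dual_index s m N \<Longrightarrow> nz x \<Longrightarrow> on_diagonal x"
  shows "real (b ^ m) * prob_in_dual b m s C k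
         \<le> (real b / (real b - 1)) ^ card {x\<in>dual_index s m N. on_diagonal x \<and> \<not> nz x} *
           (\<Sum>\<kappa>\<in>residue_vectors b m. \<Prod>x\<in>dual_index s m N.
              mean_char b (nz x) (\<Sum>r<m. \<kappa> r * dual_weight b C k x r))"
proof -
  let ?F = "dual_index s m N" and ?w = "dual_weight b C k"
  define q where "q = (real b / (real b - 1)) ^ card {x\<in>?F. on_diagonal x \<and> \<not> nz x}"
  have "prob_in_dual b m s C k \<le> q * (card (linear_solutions b m ?F ?w nz) / card (entry_box b ?F nz))"
    unfolding prob_in_dual_eq_ratio[OF b k] linear_solutions_def q_def
    by (rule ratio_entry_box_relax_le[OF b finite_dual_index nz])
  then have "real (b ^ m) * prob_in_dual b m s C k
      \<le> real (b ^ m) * (q * (card (linear_solutions b m ?F ?w nz) / card (entry_box b ?F nz)))"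
    by (rule mult_left_mono) simp
  also have "\<dots> = q * (real (b ^ m) * (card (linear_solutions b m ?F ?w nz) / card (entry_box b ?F nz)))"
    by (rule mult.left_commute)
  also have "real (b ^ m) * (card (linear_solutions b m ?F ?w nz) / card (entry_box b ?F nz))
      = (\<Sum>\<kappa>\<in>residue_vectors b m. \<Prod>x\<in>?F. mean_char b (nz x) (\<Sum>r<m. \<kappa> r * ?w x r))"
    using card_linear_solutions_char_sum[OF b finite_dual_index] card_entry_box_pos[OF finite_dual_index b]
    by (simp add: field_simps)
  finally show ?thesis
    unfolding q_def .
qed

lemma mean_char_dvd [simp]: "b dvd g \<Longrightarrow> mean_char b nz g = 1"
  by (simp add: mean_char_def)

lemma mean_char_False_not_dvd: "\<not> b dvd g \<Longrightarrow> mean_char b False g = 0"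
  by (simp add: mean_char_def)

lemma mean_char_mult_unit:
  "prime b \<Longrightarrow> \<not> b dvd c \<Longrightarrow> mean_char b nz (c * g) = mean_char b nz g"
  by (simp add: mean_char_def prime_dvd_mult_iff)

lemma prod_mean_char_triangle:
  fixes \<delta> y :: "nat \<Rightarrow> nat" and nz :: "nat \<Rightarrow> nat \<Rightarrow> bool"
  assumes b: "prime b" and d: "d < m" "\<not> b dvd \<delta> d" "\<And>i. d < i \<Longrightarrow> \<delta> i = 0"
    and nz: "\<And>i l. (i, l) \<noteq> (d, d) \<Longrightarrow> nz i l \<longleftrightarrow> i = l"
  shows "(\<Prod>(i, l)\<in>(SIGMA i:{..<m}. {l. l < m \<and> l \<le> i}). mean_char b (nz i l) (\<delta> i * y l))
         = (if \<forall>l<d. b dvd y l then mean_char b (nz d d) (y d) else 0)"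
proof -
  define T where "T = (SIGMA i:{..<m}. {l. l < m \<and> l \<le> i})"
  have "finite T"
    unfolding T_def by (intro finite_SigmaI) auto
  show ?thesis
  proof (cases "\<forall>l<d. b dvd y l")
    case True
    have "b dvd \<delta> i * y l" if "(i, l) \<in> T - {(d, d)}" for i l
    proof (cases "d < i")
      case False
      then have "l < d"
        using that unfolding T_def by auto
      then show ?thesis
        using True by simp
    qed (simp add: d(3))
    then have "(case p of (i, l) \<Rightarrow> mean_char b (nz i l) (\<delta> i * y l)) = 1" if "p \<in> T - {(d, d)}" for p
      using that by (cases p) simp
    then have rest: "(\<Prod>(i, l)\<in>T - {(d, d)}. mean_char b (nz i l) (\<delta> i * y l)) = 1"
      by (intro prod.neutral) blast
    have dd: "(d, d) \<in> T"
      unfolding T_def using d(1) by simp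
    have "(\<Prod>(i, l)\<in>T. mean_char b (nz i l) (\<delta> i * y l))
        = mean_char b (nz d d) (\<delta> d * y d) * (\<Prod>(i, l)\<in>T - {(d, d)}. mean_char b (nz i l) (\<delta> i * y l))"
      using prod.remove[OF \<open>finite T\<close> dd, of "\<lambda>(i, l). mean_char b (nz i l) (\<delta> i * y l)"]
      by simp
    also have "\<dots> = mean_char b (nz d d) (y d)"
      unfolding rest using mean_char_mult_unit[OF b d(2)] by simp
    finally show ?thesis
      unfolding T_def if_P[OF True] .
  next
    case False
    then obtain l where l: "l < d" "\<not> b dvd y l"
      by blast
    then have "(d, l) \<in> T" "\<not> nz d l"
      unfolding T_def using d(1) nz[of d l] by auto
    moreover have "mean_char b False (\<delta> d * y l) = 0"
      using b d(2) l(2) by (simp add: mean_char_False_not_dvd prime_dvd_mult_iff)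
    ultimately have "(\<Prod>(i, l)\<in>T. mean_char b (nz i l) (\<delta> i * y l)) = 0"
      using \<open>finite T\<close> by (intro prod_zero bexI[of _ "(d, l)"]) simp_all
    then show ?thesis
      unfolding T_def if_not_P[OF False] .
  qed
qed

lemma prod_dual_index:
  "(\<Prod>x\<in>dual_index s m N. f x) = (\<Prod>j\<in>{1..s}. \<Prod>(i, l)\<in>(SIGMA i:{..<N}. {l. l < m \<and> l \<le> i}). f (j, i, l))"
  unfolding dual_index_def by (subst prod.Sigma) (auto simp: split_def intro!: finite_SigmaI)

definition row_factor :: "nat \<Rightarrow> nat \<Rightarrow> (nat \<Rightarrow> nat \<Rightarrow> nat) \<Rightarrow> nat \<Rightarrow> bool \<Rightarrow> (nat \<Rightarrow> nat) \<Rightarrow> real" where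
  "row_factor b m A d nz \<kappa> =
     (if \<forall>l<d. b dvd mat_vec m A l \<kappa> then mean_char b nz (mat_vec m A d \<kappa>) else 0)"

lemma prod_row_factor_eq:
  fixes d :: "nat \<Rightarrow> nat" and m :: nat and C :: "nat \<Rightarrow> nat \<Rightarrow> nat \<Rightarrow> nat"
  assumes u: "finite u" and j0: "j0 \<in> u" and \<kappa>: "\<kappa> \<in> residue_vectors b m"
  defines "Z0 \<equiv> row_kernel b m C u (\<lambda>j. if j = j0 then d j else Suc (d j))"
    and "Z \<equiv> row_kernel b m C u (\<lambda>j. Suc (d j))"
  shows "(\<Prod>j\<in>u. row_factor b m (C j) (d j) (j = j0) \<kappa>)
         = (if \<kappa> \<in> Z then 1 else if \<kappa> \<in> Z0 then - 1 / (real b - 1) else 0)"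
proof -
  let ?f = "\<lambda>j. row_factor b m (C j) (d j) (j = j0) \<kappa>"
  have Z_iff: "\<kappa> \<in> Z \<longleftrightarrow> (\<forall>j\<in>u. \<forall>l\<le>d j. b dvd mat_vec m (C j) l \<kappa>)"
    using \<kappa> unfolding Z_def row_kernel_def by (auto simp: less_Suc_eq_le)
  have Z0_iff: "\<kappa> \<in> Z0 \<longleftrightarrow> (\<forall>j\<in>u. \<forall>l<d j. b dvd mat_vec m (C j) l \<kappa>)
      \<and> (\<forall>j\<in>u - {j0}. b dvd mat_vec m (C j) (d j) \<kappa>)"
    using \<kappa> unfolding Z0_def row_kernel_def by (auto simp: less_Suc_eq)
  consider "\<kappa> \<in> Z" | "\<kappa> \<in> Z0" "\<kappa> \<notin> Z" | "\<kappa> \<notin> Z0"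
    by blast
  then show ?thesis
  proof cases
    case 1
    then have "?f j = 1" if "j \<in> u" for j
      using that unfolding Z_iff row_factor_def by auto
    then show ?thesis using 1 by simp
  next
    case 2
    then have "?f j = 1" if "j \<in> u - {j0}" for j
      using that unfolding Z0_iff row_factor_def by auto
    moreover have "?f j0 = - 1 / (real b - 1)"
      using 2 j0 unfolding Z_iff Z0_iff row_factor_def mean_char_def by (auto simp: le_less)
    ultimately show ?thesis
      using 2 prod.remove[OF u j0, of ?f] by simp
  next
    case 3
    then obtain j where j: "j \<in> u"
      "\<not> (\<forall>l<d j. b dvd mat_vec m (C j) l \<kappa>) \<or> (j \<noteq> j0 \<and> \<not> b dvd mat_vec m (C j) (d j) \<kappa>)"
      unfolding Z0_iff by auto
    then have "?f j = 0"
      unfolding row_factor_def mean_char_def by auto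
    then have "(\<Prod>j\<in>u. ?f j) = 0"
      using u j(1) by (intro prod_zero) auto
    moreover have "\<kappa> \<notin> Z"
      using 3 unfolding Z_iff Z0_iff by (meson Diff_iff less_imp_le order_refl)
    ultimately show ?thesis
      using 3 by simp
  qed
qed

lemma sum_prod_row_factor_eq:
  fixes b m :: nat and d :: "nat \<Rightarrow> nat" and C :: "nat \<Rightarrow> nat \<Rightarrow> nat \<Rightarrow> nat"
  assumes u: "finite u" and j0: "j0 \<in> u"
  defines "Z0 \<equiv> row_kernel b m C u (\<lambda>j. if j = j0 then d j else Suc (d j))"
    and "Z \<equiv> row_kernel b m C u (\<lambda>j. Suc (d j))"
  shows "(\<Sum>\<kappa>\<in>residue_vectors b m. \<Prod>j\<in>u. row_factor b m (C j) (d j) (j = j0) \<kappa>)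
         = real (card Z) - real (card (Z0 - Z)) / (real b - 1)"
proof -
  have "Z \<subseteq> Z0"
    unfolding Z_def Z0_def by (rule row_kernel_antimono) simp
  moreover have "Z0 \<subseteq> residue_vectors b m"
    unfolding Z0_def row_kernel_def by auto
  ultimately have "residue_vectors b m \<inter> Z = Z" "residue_vectors b m \<inter> - Z \<inter> Z0 = Z0 - Z"
    by auto
  then have "(\<Sum>\<kappa>\<in>residue_vectors b m. if \<kappa> \<in> Z then 1 else if \<kappa> \<in> Z0 then - 1 / (real b - 1) else 0)
      = real (card Z) - real (card (Z0 - Z)) / (real b - 1)"
    by (simp add: sum.If_cases)
  then show ?thesis
    using prod_row_factor_eq[OF u j0, of _ b m C d] unfolding Z_def Z0_def by simp
qed

lemma prod_dual_index_relaxed: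
  assumes b: "prime b" and u: "u = {j\<in>{1..s}. k j \<noteq> 0}"
    and d: "\<And>j. j \<in> u \<Longrightarrow> d j < m \<and> digit b (k j) (d j) \<noteq> 0 \<and> (\<forall>i>d j. digit b (k j) i = 0)"
  shows "(\<Prod>x\<in>dual_index s m m. mean_char b ((\<lambda>(j, i, l). i = l \<and> \<not> (j \<in> u \<and> j \<noteq> j0 \<and> i = d j)) x)
            (\<Sum>r<m. \<kappa> r * dual_weight b C k x r))
         = (\<Prod>j\<in>u. row_factor b m (C j) (d j) (j = j0) \<kappa>)"
proof -
  let ?T = "SIGMA i:{..<m}. {l. l < m \<and> l \<le> i}"
  let ?f = "\<lambda>j (i, l). mean_char b (i = l \<and> \<not> (j \<in> u \<and> j \<noteq> j0 \<and> i = d j))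
              (digit b (k j) i * mat_vec m (C j) l \<kappa>)"
  have row: "(\<Prod>p\<in>?T. ?f j p) = (if j \<in> u then row_factor b m (C j) (d j) (j = j0) \<kappa> else 1)"
    if j: "j \<in> {1..s}" for j
  proof (cases "j \<in> u")
    case True
    have "\<not> b dvd digit b (k j) (d j)"
      using d[OF True] digit_less[of b "k j" "d j"] prime_gt_0_nat[OF b] by (auto dest: dvd_imp_le)
    then have "(\<Prod>p\<in>?T. ?f j p) = (if \<forall>l<d j. b dvd mat_vec m (C j) l \<kappa>
        then mean_char b (d j = d j \<and> \<not> (j \<in> u \<and> j \<noteq> j0 \<and> d j = d j)) (mat_vec m (C j) (d j) \<kappa>) else 0)"
      using d[OF True] by (intro prod_mean_char_triangle[OF b]) auto
    moreover have "(d j = d j \<and> \<not> (j \<in> u \<and> j \<noteq> j0 \<and> d j = d j)) \<longleftrightarrow> j = j0"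
      using True by auto
    ultimately show ?thesis
      unfolding if_P[OF True] row_factor_def by (simp only:)
  next
    case False
    then have "k j = 0"
      using j u by auto
    then show ?thesis
      using False by (simp add: digit_def split_def)
  qed
  have "(\<Prod>x\<in>dual_index s m m. mean_char b ((\<lambda>(j, i, l). i = l \<and> \<not> (j \<in> u \<and> j \<noteq> j0 \<and> i = d j)) x)
            (\<Sum>r<m. \<kappa> r * dual_weight b C k x r)) = (\<Prod>j\<in>{1..s}. \<Prod>p\<in>?T. ?f j p)"
    unfolding prod_dual_index by (simp add: sum_dual_weight split_def)
  also have "\<dots> = (\<Prod>j\<in>{1..s}. if j \<in> u then row_factor b m (C j) (d j) (j = j0) \<kappa> else 1)"
    by (rule prod.cong[OF refl], erule row)
  also have "\<dots> = (\<Prod>j\<in>{1..s} \<inter> u. row_factor b m (C j) (d j) (j = j0) \<kappa>)"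
    by (rule prod.inter_restrict[symmetric]) simp
  also have "{1..s} \<inter> u = u"
    using u by auto
  finally show ?thesis .
qed

lemma prob_in_dual_le:
  assumes b: "prime b" and net: "is_net b t m u (net_point b m C)"
    and u: "u = {j\<in>{1..s}. k j \<noteq> 0}" "u \<noteq> {}" and k: "\<forall>j\<in>{1..s}. k j < b ^ m"
  shows "prob_in_dual b m s C k \<le> (real b / (real b - 1)) ^ (card u - 1) * real b powr (real t - real m)"
proof -
  have b1: "b > 1"
    using prime_gt_1_nat[OF b] .
  have fin_u: "finite u"
    using u(1) by simp
  obtain j0 where j0: "j0 \<in> u"
    using u(2) by blast
  have "\<forall>j\<in>u. \<exists>e<m. digit b (k j) e \<noteq> 0 \<and> (\<forall>i>e. digit b (k j) i = 0)"
    using top_digit_less[OF b1] k u(1) by auto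
  from bchoice[OF this] obtain d
    where d: "\<forall>j\<in>u. d j < m \<and> digit b (k j) (d j) \<noteq> 0 \<and> (\<forall>i>d j. digit b (k j) i = 0)"
    by blast
  \<comment> \<open>the diagonal entries \<open>(j, d j, d j)\<close>, \<open>j \<in> u - {j0}\<close>, may now vanish\<close>
  define nz where "nz = (\<lambda>(j, i, l). i = l \<and> \<not> (j \<in> u \<and> j \<noteq> j0 \<and> i = d j))"
  define n where "n = (\<lambda>j. if j = j0 then d j else Suc (d j))"
  have n_Suc: "n(j0 := Suc (n j0)) = (\<lambda>j. Suc (d j))"
    by (auto simp: n_def)
  have "{x\<in>dual_index s m m. on_diagonal x \<and> \<not> nz x} = (\<lambda>j. (j, d j, d j)) ` (u - {j0})"
    using d u(1) by (auto simp: nz_def on_diagonal_def dual_index_def)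
  moreover have "inj_on (\<lambda>j. (j, d j, d j)) (u - {j0})"
    by (rule inj_onI) simp
  ultimately have relaxed: "card {x\<in>dual_index s m m. on_diagonal x \<and> \<not> nz x} = card u - 1"
    using fin_u j0 by (simp add: card_image)
  have "real (b ^ m) * prob_in_dual b m s C k
      \<le> (real b / (real b - 1)) ^ (card u - 1) *
         (\<Sum>\<kappa>\<in>residue_vectors b m. \<Prod>x\<in>dual_index s m m. mean_char b (nz x) (\<Sum>r<m. \<kappa> r * dual_weight b C k x r))"
    unfolding relaxed[symmetric] using b1 k
    by (intro prob_in_dual_le_relaxed_char_sum) (auto simp: nz_def on_diagonal_def)
  also have "(\<Sum>\<kappa>\<in>residue_vectors b m. \<Prod>x\<in>dual_index s m m. mean_char b (nz x) (\<Sum>r<m. \<kappa> r * dual_weight b C k x r))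
      = (\<Sum>\<kappa>\<in>residue_vectors b m. \<Prod>j\<in>u. row_factor b m (C j) (d j) (j = j0) \<kappa>)"
    unfolding nz_def by (intro sum.cong refl prod_dual_index_relaxed[OF b u(1)]) (use d in blast)
  also have "\<dots> = real (card (row_kernel b m C u (n(j0 := Suc (n j0)))))
        - real (card (row_kernel b m C u n - row_kernel b m C u (n(j0 := Suc (n j0))))) / (real b - 1)"
    unfolding n_Suc unfolding n_def by (rule sum_prod_row_factor_eq[OF fin_u j0])
  also have "\<dots> \<le> real b ^ t"
    by (rule signed_card_row_kernel_le[OF b1 net fin_u j0])
  finally have "real b ^ m * prob_in_dual b m s C k \<le> (real b / (real b - 1)) ^ (card u - 1) * real b ^ t"
    using b1 by (simp add: mult_left_mono)
  then show ?thesis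
    using b1 by (simp add: powr_diff powr_realpow field_simps)
qed

lemma nonsingular_mat_vec_dvd_imp_zero:
  assumes ns: "nonsingular b m A" and \<kappa>: "\<kappa> \<in> residue_vectors b m"
    and dvd: "\<forall>l<m. b dvd mat_vec m A l \<kappa>" and i: "i < m"
  shows "\<kappa> i = 0"
proof -
  obtain B where B: "\<forall>i<m. \<forall>r<m. (\<Sum>l<m. B i l * A l r) mod b = (if i = r then 1 else 0)"
    using ns unfolding nonsingular_def by blast
  have "(\<Sum>r<m. (if i = r then 1 else 0) * \<kappa> r) = (\<Sum>r<m. if i = r then \<kappa> r else 0)"
    by (intro sum.cong) auto
  then have "\<kappa> i = (\<Sum>r<m. (if i = r then 1 else 0) * \<kappa> r) mod b"
    using i residue_vectors_less[OF \<kappa> i] by simp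
  also have "\<dots> = (\<Sum>r<m. (\<Sum>l<m. B i l * A l r) mod b * \<kappa> r) mod b"
    using B i by (intro arg_cong[where f = "\<lambda>x. x mod b"] sum.cong) auto
  also have "\<dots> = (\<Sum>r<m. (\<Sum>l<m. B i l * A l r) * \<kappa> r) mod b"
    by (intro mod_sum_cong) (simp add: mod_mult_left_eq)
  also have "(\<Sum>r<m. (\<Sum>l<m. B i l * A l r) * \<kappa> r) = (\<Sum>l<m. B i l * mat_vec m A l \<kappa>)"
    unfolding mat_vec_def sum_distrib_left sum_distrib_right by (subst sum.swap) (simp add: mult.assoc)
  also have "b dvd (\<Sum>l<m. B i l * mat_vec m A l \<kappa>)"
    using dvd by (intro dvd_sum dvd_mult) simp
  then have "(\<Sum>l<m. B i l * mat_vec m A l \<kappa>) mod b = 0"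
    by simp
  finally show ?thesis .
qed

lemma prod_dual_index_eq_0_if_high_digit:
  assumes b: "prime b" and j1: "j1 \<in> {1..s}" and ns: "nonsingular b m (C j1)"
    and i0: "m \<le> i0" "i0 < N" "digit b (k j1) i0 \<noteq> 0"
    and \<kappa>: "\<kappa> \<in> residue_vectors b m" "\<kappa> r0 \<noteq> 0" "r0 < m"
  shows "(\<Prod>x\<in>dual_index s m N. mean_char b (on_diagonal x) (\<Sum>r<m. \<kappa> r * dual_weight b C k x r)) = 0"
proof -
  obtain l where l: "l < m" "\<not> b dvd mat_vec m (C j1) l \<kappa>"
    using nonsingular_mat_vec_dvd_imp_zero[OF ns \<kappa>(1) _ \<kappa>(3)] \<kappa>(2) by blast
  have "\<not> b dvd digit b (k j1) i0"
    using i0(3) digit_less[of b "k j1" i0] prime_gt_0_nat[OF b] by (auto dest: dvd_imp_le)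
  then have "\<not> b dvd (\<Sum>r<m. \<kappa> r * dual_weight b C k (j1, i0, l) r)"
    using b l(2) by (simp add: sum_dual_weight prime_dvd_mult_iff)
  moreover have "(j1, i0, l) \<in> dual_index s m N" "\<not> on_diagonal (j1, i0, l)"
    using j1 i0 l(1) by (auto simp: dual_index_def on_diagonal_def)
  ultimately show ?thesis
    by (intro prod_zero bexI[of _ "(j1, i0, l)"]) (simp_all add: mean_char_False_not_dvd)
qed

lemma prob_in_dual_eq_high_digit:
  assumes b: "prime b" and j1: "j1 \<in> {1..s}" "b ^ m \<le> k j1"
    and ns: "\<forall>j\<in>{1..s}. nonsingular b m (C j)"
  shows "prob_in_dual b m s C k = 1 / real b ^ m"
proof -
  have b1: "b > 1"
    using prime_gt_1_nat[OF b] .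
  define N where "N = (\<Sum>j\<in>{1..s}. k j)"
  have k_le: "k j \<le> N" if "j \<in> {1..s}" for j
    unfolding N_def using that by (intro member_le_sum) auto
  moreover have "N < b ^ N"
    using less_exp[of N] power_mono[of 2 b N] b1 by linarith
  ultimately have kN: "\<forall>j\<in>{1..s}. k j < b ^ N"
    by (meson le_less_trans)
  have "0 < b ^ m"
    using b1 by simp
  then have "k j1 > 0"
    using j1(2) by linarith
  then obtain i0 where i0: "b ^ i0 \<le> k j1" "k j1 < b ^ Suc i0" "digit b (k j1) i0 \<noteq> 0"
    using top_digit_exists[OF b1] by blast
  have "m \<le> i0"
    using le_less_trans[OF j1(2) i0(2)] b1 power_less_imp_less_exp by (metis less_Suc_eq_le)
  have "i0 < b ^ i0"
    using less_exp[of i0] power_mono[of 2 b i0] b1 by linarith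
  then have "i0 < N"
    using i0(1) k_le[OF j1(1)] by linarith
  define \<kappa>0 where "\<kappa>0 = restrict (\<lambda>_. 0::nat) {..<m}"
  define P where "P \<kappa> = (\<Prod>x\<in>dual_index s m N. mean_char b (on_diagonal x) (\<Sum>r<m. \<kappa> r * dual_weight b C k x r))"
    for \<kappa>
  have "P \<kappa> = 0" if "\<kappa> \<in> residue_vectors b m - {\<kappa>0}" for \<kappa>
  proof -
    have "\<exists>r0<m. \<kappa> r0 \<noteq> 0"
    proof (rule ccontr)
      assume "\<not> (\<exists>r0<m. \<kappa> r0 \<noteq> 0)"
      then have "\<kappa> = \<kappa>0"
        using that unfolding \<kappa>0_def residue_vectors_def by (auto simp: PiE_iff extensional_def fun_eq_iff)
      then show False
        using that by simp
    qed
    then obtain r0 where "r0 < m" "\<kappa> r0 \<noteq> 0"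
      by blast
    then show ?thesis
      unfolding P_def using that b j1(1) ns \<open>m \<le> i0\<close> \<open>i0 < N\<close> i0(3)
      by (intro prod_dual_index_eq_0_if_high_digit) auto
  qed
  moreover have "P \<kappa>0 = 1" "\<kappa>0 \<in> residue_vectors b m"
    using b1 by (auto simp: P_def \<kappa>0_def residue_vectors_def)
  ultimately have "(\<Sum>\<kappa>\<in>residue_vectors b m. P \<kappa>) = 1"
    by (simp add: sum.remove[OF finite_residue_vectors])
  then have "real (b ^ m) * prob_in_dual b m s C k = 1"
    unfolding prob_in_dual_char_sum[OF b1 kN] P_def .
  then show ?thesis
    using b1 by (simp add: field_simps)
qed

theorem lemma2p16:
  fixes b m s t :: nat and C :: "nat \<Rightarrow> nat \<Rightarrow> nat \<Rightarrow> nat"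
    and tu :: "nat set \<Rightarrow> nat" and k :: "nat \<Rightarrow> nat"
  assumes "prime b" and "m \<ge> 1" and "s \<ge> 1"
    and "\<forall>j\<in>{1..s}. \<forall>i<m. \<forall>l<m. C j i l < b"
    and "is_net b t m {1..s} (net_point b m C)"
    and "\<forall>u. u \<subseteq> {1..s} \<and> u \<noteq> {} \<longrightarrow> is_net b (tu u) m u (net_point b m C)"
    and "\<exists>j\<in>{1..s}. k j \<noteq> 0"
  shows "let u = {j\<in>{1..s}. k j \<noteq> 0};
             Pr = measure (L_measure b m s)
                    {\<omega> \<in> space (L_measure b m s).
                       in_dual b m s (\<lambda>j. mat_prod b m (L_of m \<omega> j) (C j)) k}
         in ((\<forall>j\<in>{1..s}. k j < b ^ m) \<longrightarrow>
               Pr \<le> (real b / (real b - 1)) ^ (card u - 1) * real b powr (real (tu u) - real m))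
          \<and> ((\<exists>j\<in>{1..s}. k j \<ge> b ^ m) \<and> (\<forall>j\<in>{1..s}. nonsingular b m (C j)) \<longrightarrow>
               Pr = 1 / real b ^ m)"
proof -
  define u where "u = {j\<in>{1..s}. k j \<noteq> 0}"
  have "u \<noteq> {}" "u \<subseteq> {1..s}"
    using assms(7) unfolding u_def by auto
  then have net_u: "is_net b (tu u) m u (net_point b m C)"
    using assms(6) by blast
  show ?thesis
    unfolding Let_def u_def[symmetric] prob_in_dual_def[symmetric]
  proof (intro conjI impI)
    assume "\<forall>j\<in>{1..s}. k j < b ^ m"
    then show "prob_in_dual b m s C k \<le> (real b / (real b - 1)) ^ (card u - 1) * real b powr (real (tu u) - real m)"
      by (rule prob_in_dual_le[OF assms(1) net_u u_def \<open>u \<noteq> {}\<close>])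
  next
    assume high: "(\<exists>j\<in>{1..s}. b ^ m \<le> k j) \<and> (\<forall>j\<in>{1..s}. nonsingular b m (C j))"
    then obtain j1 where "j1 \<in> {1..s}" "b ^ m \<le> k j1"
      by blast
    then show "prob_in_dual b m s C k = 1 / real b ^ m"
      using high by (intro prob_in_dual_eq_high_digit[OF assms(1)]) auto
  qed
qed

end
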